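(* There exist pairwise disjoint closed disks $\mathcal D_0,\mathcal D_1\subseteq \mathbb S^2$ and a continuous map $f\colon \mathbb S^2\to\mathbb S^2$ such that: (i) $f^{-1}(\mathcal D_0)=\mathcal D_0$ and $f|_{\mathcal D_0}\colon\mathcal D_0\to\mathcal D_0$ is the identity map; (ii) $f^{-1}(\mathcal D_1)$ is the union of pairwise disjoint closed disks $\mathcal D_{1,1},\mathcal D_{1,2},\mathcal D_{1,3}$ in $\mathbb S^2$, and $f|_{\mathcal D_{1,k}}\colon \mathcal D_{1,k}\to\mathcal D_1$ is a homeomorphism for each $k\in\{1,2,3\}$. Further, there is a loop $\gamma$ in $\mathbb S^2\setminus \mathrm{int}(\mathcal D_0\cup\mathcal D_{1,1}\cup\mathcal D_{1,2}\cup\mathcal D_{1,3})$ which is not homotopically trivial in $\mathbb S^2\setminus \mathrm{int}(\mathcal D_0\cup\mathcal D_{1,1}\cup\mathcal D_{1,2}\cup\mathcal D_{1,3})$, but such that $f(\gamma)$ is null-homotopic in $\mathbb S^2\setminus\mathrm{int}(\mathcal D_0\cup\mathcal D_1)$. *)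

theory Defs
  imports "HOL-Analysis.Analysis"
begin

definition S2 :: "(real^3) set" where
  "S2 = sphere 0 1"

definition closed_disk_S2 :: "(real^3) set \<Rightarrow> bool" where
  "closed_disk_S2 D \<longleftrightarrow> D \<subseteq> S2 \<and> D homeomorphic (cball (0::real^2) 1)"

definition int_S2 :: "(real^3) set \<Rightarrow> (real^3) set" where
  "int_S2 A = (top_of_set S2) interior_of A"

end

theory Submission
  imports Defs "HOL-Complex_Analysis.Winding_Numbers"
begin

(* The sphere is covered by two hemispheres, both charted over the closed unit disk by vertical
   projection. f is the identity on the upper hemisphere; on the lower one it is the lift of a planar
   map that is the identity near the unit circle and, near the real axis, folds [-1/2, 1/2] three
   times onto itself by a zigzag. D0 is a square on the upper hemisphere, D1 lies over a thin
   rectangle R around 0 on the lower one, and the three preimage disks lie over the three rectangles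
   that the zigzag maps affinely onto R.

   A circle around the first two preimage disks is essential: the two poles lie in the interiors of
   D0 and of the middle preimage disk, so vertical projection carries the complement of the interiors
   into C - {0}, where the circle has winding number 1. The zigzag has opposite slopes over these two
   disks, so the image of the circle winds around R with total degree 0; concretely it stays in a
   region from which straight segments towards -1 avoid R, and so contracts. *)

section \<open>Hemisphere charts\<close>

lemma continuous_on_vector3 [continuous_intros]:
  fixes a b c :: "'a::topological_space \<Rightarrow> real"
  assumes "continuous_on S a" "continuous_on S b" "continuous_on S c"
  shows "continuous_on S (\<lambda>x. vector [a x, b x, c x] :: real^3)"
proof -
  have eq: "(\<lambda>x. vector [a x, b x, c x] :: real^3) =
        (\<lambda>x. a x *\<^sub>R axis 1 1 + b x *\<^sub>R axis 2 1 + c x *\<^sub>R axis 3 1)"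
    by (simp add: fun_eq_iff vec_eq_iff forall_3 axis_def)
  show ?thesis
    unfolding eq by (intro continuous_intros assms)
qed

lemma mem_S2: "x \<in> S2 \<longleftrightarrow> (x$1)^2 + (x$2)^2 + (x$3)^2 = 1"
  unfolding S2_def mem_sphere dist_0_norm norm_eq_sqrt_inner inner_vec_def sum_3
  by (simp add: power2_eq_square)

definition plane_proj :: "real^3 \<Rightarrow> complex" where
  "plane_proj x = Complex (x$1) (x$2)"

definition sphere_lift :: "real \<Rightarrow> complex \<Rightarrow> real^3" where
  "sphere_lift s w = vector [Re w, Im w, s * sqrt (1 - (cmod w)^2)]"

lemma continuous_on_plane_proj: "continuous_on S plane_proj"
  unfolding plane_proj_def Complex_eq by (intro continuous_intros)

lemma continuous_on_sphere_lift: "continuous_on S (sphere_lift s)"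
  unfolding sphere_lift_def by (intro continuous_intros)

lemma plane_proj_sphere_lift [simp]: "plane_proj (sphere_lift s w) = w"
  by (simp add: plane_proj_def sphere_lift_def complex_eq_iff)

lemma sphere_lift_component3 [simp]: "sphere_lift s w $ 3 = s * sqrt (1 - (cmod w)^2)"
  by (simp add: sphere_lift_def)

lemma inj_sphere_lift: "inj (sphere_lift s)"
  by (rule inj_on_inverseI[where g = plane_proj]) simp

lemma cmod_plane_proj_power2:
  assumes "x \<in> S2"
  shows "(cmod (plane_proj x))^2 = 1 - (x$3)^2"
  using assms by (simp add: mem_S2 plane_proj_def cmod_power2)

lemma cmod_plane_proj_le_1:
  assumes "x \<in> S2"
  shows "cmod (plane_proj x) \<le> 1"
proof -
  have "(cmod (plane_proj x))^2 \<le> 1^2"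
    using cmod_plane_proj_power2[OF assms] by simp
  then show ?thesis
    by (rule power2_le_imp_le) simp
qed

lemma sphere_lift_in_S2:
  assumes "\<bar>s\<bar> = 1" "cmod w \<le> 1"
  shows "sphere_lift s w \<in> S2"
proof -
  have "s^2 = 1"
    using assms(1) by (metis power2_abs one_power2)
  moreover have "(cmod w)^2 \<le> 1"
    using assms(2) by (simp add: power_le_one)
  ultimately show ?thesis
    by (simp add: mem_S2 sphere_lift_def power_mult_distrib cmod_power2)
qed

lemma sphere_lift_plane_proj:
  assumes "x \<in> S2" "\<bar>s\<bar> = 1" "0 \<le> s * x$3"
  shows "sphere_lift s (plane_proj x) = x"
proof -
  have "s = 1 \<or> s = -1"
    using assms(2) by linarith
  then have "s * sqrt (1 - (cmod (plane_proj x))^2) = x$3"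
    using assms(1,3) by (auto simp: cmod_plane_proj_power2)
  then show ?thesis
    by (simp add: sphere_lift_def plane_proj_def vec_eq_iff forall_3)
qed

lemma mem_sphere_lift_image:
  assumes "\<bar>s\<bar> = 1" "K \<subseteq> cball 0 1"
  shows "x \<in> sphere_lift s ` K \<longleftrightarrow> x \<in> S2 \<and> 0 \<le> s * x$3 \<and> plane_proj x \<in> K"
proof
  assume "x \<in> sphere_lift s ` K"
  then obtain w where w: "w \<in> K" "x = sphere_lift s w" by blast
  then have "cmod w \<le> 1"
    using assms(2) by auto
  moreover have "s * s = 1"
    using assms(1) by (metis abs_mult_self_eq mult_1)
  ultimately have "0 \<le> s * (s * sqrt (1 - (cmod w)^2))"
    by (simp add: mult.assoc[symmetric] power_le_one)
  then show "x \<in> S2 \<and> 0 \<le> s * x$3 \<and> plane_proj x \<in> K"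
    using assms(1) w \<open>cmod w \<le> 1\<close> by (simp add: sphere_lift_in_S2)
next
  assume "x \<in> S2 \<and> 0 \<le> s * x$3 \<and> plane_proj x \<in> K"
  then show "x \<in> sphere_lift s ` K"
    using assms(1) sphere_lift_plane_proj by (metis image_eqI)
qed

lemma sphere_lift_upper_pos: "cmod w < 1 \<Longrightarrow> 0 < sphere_lift 1 w $ 3"
  by (simp add: abs_square_less_1)

lemma sphere_lift_lower_nonpos: "cmod w \<le> 1 \<Longrightarrow> sphere_lift (-1) w $ 3 \<le> 0"
  by (simp add: power_le_one)

lemma sphere_lift_upper_lower_disjoint:
  assumes "K \<subseteq> ball 0 1" "L \<subseteq> cball 0 1"
  shows "sphere_lift 1 ` K \<inter> sphere_lift (-1) ` L = {}"
proof -
  have False if "v \<in> K" "w \<in> L" "sphere_lift 1 v = sphere_lift (-1) w" for v w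
  proof -
    have "0 < sphere_lift 1 v $ 3" "sphere_lift (-1) w $ 3 \<le> 0"
      using that(1,2) assms sphere_lift_upper_pos sphere_lift_lower_nonpos by (auto simp del: sphere_lift_component3)
    then show False
      using that(3) by simp
  qed
  then show ?thesis
    by blast
qed

lemma plane_proj_eq_0_imp_pole:
  assumes "x \<in> S2" "plane_proj x = 0"
  shows "x = sphere_lift 1 0 \<or> x = sphere_lift (-1) 0"
  using assms sphere_lift_plane_proj[of x 1] sphere_lift_plane_proj[of x "-1"] by force

lemma homeomorphism_sphere_lift:
  "homeomorphism K (sphere_lift s ` K) (sphere_lift s) plane_proj"
  by (rule homeomorphismI) (auto intro: continuous_on_sphere_lift continuous_on_plane_proj)

lemma homeomorphism_sphere_lift_conj:
  assumes "homeomorphism K L h h'"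
  shows "homeomorphism (sphere_lift s ` K) (sphere_lift s ` L)
           (sphere_lift s \<circ> h \<circ> plane_proj) (sphere_lift s \<circ> h' \<circ> plane_proj)"
  using homeomorphism_compose[OF homeomorphism_compose[OF
          homeomorphism_symD[OF homeomorphism_sphere_lift] assms] homeomorphism_sphere_lift]
  by (simp add: o_assoc)

lemma closed_disk_S2_sphere_lift:
  assumes "\<bar>s\<bar> = 1" "K \<subseteq> cball 0 1" "convex K" "compact K" "interior K \<noteq> {}"
  shows "closed_disk_S2 (sphere_lift s ` K)"
proof -
  have "K homeomorphic cball (0::real^2) 1"
    using assms(3-5)
    by (intro homeomorphic_convex_compact_sets) (auto simp: aff_dim_nonempty_interior aff_dim_cball)
  then have "sphere_lift s ` K homeomorphic cball (0::real^2) 1"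
    by (meson homeomorphic_def homeomorphic_trans homeomorphism_symD homeomorphism_sphere_lift)
  moreover have "sphere_lift s ` K \<subseteq> S2"
    using assms(1,2) sphere_lift_in_S2 by (auto simp: subset_iff)
  ultimately show ?thesis
    by (simp add: closed_disk_S2_def)
qed

lemma sphere_lift_in_int_S2:
  assumes "\<bar>s\<bar> = 1" "K \<subseteq> cball 0 1" "w \<in> interior K" "cmod w < 1"
  shows "sphere_lift s w \<in> int_S2 (sphere_lift s ` K)"
proof -
  let ?U = "S2 \<inter> {x. 0 < s * x$3 \<and> plane_proj x \<in> interior K}"
  have "open {x. plane_proj x \<in> interior K}"
    using open_vimage[OF open_interior continuous_on_plane_proj] by (simp add: vimage_def)
  then have "open {x. 0 < s * x$3 \<and> plane_proj x \<in> interior K}"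
    by (intro open_Collect_conj open_Collect_less continuous_intros) auto
  then have "openin (top_of_set S2) ?U"
    by (rule openin_open_Int)
  moreover have "?U \<subseteq> sphere_lift s ` K"
    using assms(1,2) interior_subset[of K] by (auto simp: mem_sphere_lift_image)
  moreover have "sphere_lift s w \<in> ?U"
  proof -
    have "0 < 1 - (cmod w)^2"
      using assms(4) by (simp add: abs_square_less_1)
    moreover have "s * s = 1"
      using assms(1) by (metis abs_mult_self_eq mult_1)
    ultimately have "0 < s * sphere_lift s w $ 3"
      by (simp add: mult.assoc[symmetric])
    then show ?thesis
      using assms sphere_lift_in_S2 by simp
  qed
  ultimately show ?thesis
    unfolding int_S2_def by (meson interior_of_maximal subsetD)
qed

section \<open>The planar fold\<close>

definition rect :: "real \<Rightarrow> real \<Rightarrow> real \<Rightarrow> complex set" where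
  "rect c r h = cbox (Complex (c - r) (- h)) (Complex (c + r) h)"

lemma mem_rect: "w \<in> rect c r h \<longleftrightarrow> \<bar>Re w - c\<bar> \<le> r \<and> \<bar>Im w\<bar> \<le> h"
  unfolding rect_def in_cbox_complex_iff by auto

lemma centre_in_interior_rect:
  assumes "0 < r" "0 < h"
  shows "complex_of_real c \<in> interior (rect c r h)"
  using assms by (simp add: rect_def interior_cbox in_box_complex_iff)

lemma cmod_less_1_if_abs_le_half:
  assumes "\<bar>Re w\<bar> \<le> 1/2" "\<bar>Im w\<bar> \<le> 1/2"
  shows "cmod w < 1"
proof -
  have "(Re w)^2 \<le> (1/2)^2" "(Im w)^2 \<le> (1/2)^2"
    using assms by (simp_all add: abs_le_square_iff[symmetric])
  then have "(cmod w)^2 < 1^2"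
    using cmod_power2[of w] by (simp add: power2_eq_square)
  then show ?thesis
    by (rule power2_less_imp_less) simp
qed

lemma rect_subset_ball:
  assumes "\<bar>c\<bar> + r \<le> 1/2" "h \<le> 1/2"
  shows "rect c r h \<subseteq> ball 0 1"
  using assms by (auto simp: mem_rect intro!: cmod_less_1_if_abs_le_half)

lemma closed_disk_S2_sphere_lift_rect:
  assumes "\<bar>s\<bar> = 1" "0 < r" "0 < h" "\<bar>c\<bar> + r \<le> 1/2" "h \<le> 1/2"
  shows "closed_disk_S2 (sphere_lift s ` rect c r h)"
proof (rule closed_disk_S2_sphere_lift)
  show "rect c r h \<subseteq> cball 0 1"
    using rect_subset_ball[OF assms(4,5)] by auto
  show "interior (rect c r h) \<noteq> {}"
    using centre_in_interior_rect[OF assms(2,3)] by blast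
qed (auto simp: assms(1) rect_def)

lemma homeomorphism_rect_stretch:
  assumes "m \<noteq> 0"
  shows "homeomorphism (rect c r h) (rect 0 (\<bar>m\<bar> * r) h)
           (\<lambda>w. Complex (m * (Re w - c)) (Im w)) (\<lambda>v. Complex (Re v / m + c) (Im v))"
proof (rule homeomorphismI)
  show "continuous_on (rect c r h) (\<lambda>w. Complex (m * (Re w - c)) (Im w))"
    unfolding Complex_eq by (intro continuous_intros)
  show "continuous_on (rect 0 (\<bar>m\<bar> * r) h) (\<lambda>v. Complex (Re v / m + c) (Im v))"
    unfolding Complex_eq by (intro continuous_intros) (use assms in auto)
  show "(\<lambda>w. Complex (m * (Re w - c)) (Im w)) ` rect c r h \<subseteq> rect 0 (\<bar>m\<bar> * r) h"
    by (auto simp: mem_rect abs_mult mult_left_mono)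
  show "(\<lambda>v. Complex (Re v / m + c) (Im v)) ` rect 0 (\<bar>m\<bar> * r) h \<subseteq> rect c r h"
    using assms by (auto simp: mem_rect abs_divide pos_divide_le_eq mult.commute)
qed (use assms in \<open>simp_all add: complex_eq_iff\<close>)

(* Piecewise linear with slopes 1, 3, -3, 3, 1 and breaks at -1/2, -1/6, 1/6, 1/2: the identity
   outside [-1/2, 1/2], which it maps three times onto itself. *)
definition zigzag :: "real \<Rightarrow> real" where
  "zigzag x = x + \<bar>x + 1/2\<bar> - 3 * \<bar>x + 1/6\<bar> + 3 * \<bar>x - 1/6\<bar> - \<bar>x - 1/2\<bar>"

definition plateau :: "real \<Rightarrow> real" where
  "plateau y = min 1 (max 0 (4 - 10 * \<bar>y\<bar>))"

definition fold_plane :: "complex \<Rightarrow> complex" where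
  "fold_plane w = Complex (Re w + plateau (Im w) * (zigzag (Re w) - Re w)) (Im w)"

lemma zigzag_eq_self: "1/2 \<le> \<bar>x\<bar> \<Longrightarrow> zigzag x = x"
  unfolding zigzag_def by (auto split: abs_split)

lemma abs_zigzag_le: "\<bar>x\<bar> \<le> 1/2 \<Longrightarrow> \<bar>zigzag x\<bar> \<le> 1/2"
  unfolding zigzag_def by (auto split: abs_split)

lemma zigzag_on_third:
  assumes "k \<in> {1, 2, 3}" "\<bar>x - (real k - 2) / 3\<bar> \<le> 1/6"
  shows "zigzag x = (-1) ^ (k + 1) * 3 * (x - (real k - 2) / 3)"
  using assms unfolding zigzag_def by (auto split: abs_split)

lemma abs_zigzag_le_quarter_iff:
  "\<bar>zigzag x\<bar> \<le> 1/4 \<longleftrightarrow> \<bar>x + 1/3\<bar> \<le> 1/12 \<or> \<bar>x\<bar> \<le> 1/12 \<or> \<bar>x - 1/3\<bar> \<le> 1/12"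
  unfolding zigzag_def by (auto split: abs_split)

lemma plateau_eq_1: "\<bar>y\<bar> \<le> 3/10 \<Longrightarrow> plateau y = 1"
  unfolding plateau_def by auto

lemma plateau_eq_0: "2/5 \<le> \<bar>y\<bar> \<Longrightarrow> plateau y = 0"
  unfolding plateau_def by auto

lemma plateau_bounds: "0 \<le> plateau y" "plateau y \<le> 1"
  unfolding plateau_def by auto

lemma continuous_on_fold_plane: "continuous_on S fold_plane"
  unfolding fold_plane_def Complex_eq plateau_def zigzag_def by (intro continuous_intros)

lemma Im_fold_plane [simp]: "Im (fold_plane w) = Im w"
  by (simp add: fold_plane_def)

lemma fold_plane_eq_self:
  assumes "1/2 \<le> \<bar>Re w\<bar> \<or> 2/5 \<le> \<bar>Im w\<bar>"
  shows "fold_plane w = w"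
  using assms by (auto simp: fold_plane_def zigzag_eq_self plateau_eq_0 complex_eq_iff)

lemma fold_plane_on_strip:
  assumes "\<bar>Im w\<bar> \<le> 3/10"
  shows "fold_plane w = Complex (zigzag (Re w)) (Im w)"
  using assms by (simp add: fold_plane_def plateau_eq_1)

lemma cmod_fold_plane_le_1:
  assumes "cmod w \<le> 1"
  shows "cmod (fold_plane w) \<le> 1"
proof (cases "1/2 \<le> \<bar>Re w\<bar> \<or> 2/5 \<le> \<bar>Im w\<bar>")
  case True
  then show ?thesis
    using assms by (simp add: fold_plane_eq_self)
next
  case False
  let ?t = "plateau (Im w)"
  have "Re (fold_plane w) = (1 - ?t) * Re w + ?t * zigzag (Re w)"
    by (simp add: fold_plane_def algebra_simps)
  also have "\<dots> \<in> {-1/2..1/2}"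
    using False abs_zigzag_le[of "Re w"] plateau_bounds[of "Im w"]
    by (intro convexD[OF convex_real_interval(5), unfolded real_scaleR_def]) (auto simp: abs_le_iff)
  finally have "\<bar>Re (fold_plane w)\<bar> \<le> 1/2"
    by (auto simp: abs_if)
  then show ?thesis
    using False cmod_less_1_if_abs_le_half[of "fold_plane w"] by auto
qed

lemma fold_plane_unit_circle: "cmod w = 1 \<Longrightarrow> fold_plane w = w"
  using cmod_less_1_if_abs_le_half[of w] by (intro fold_plane_eq_self) force

definition target_rect :: "complex set" where
  "target_rect = rect 0 (1/4) (1/20)"

(* The rectangles over the three thirds of [-1/2, 1/2] on which zigzag is affine, shrunk so that
   zigzag maps them onto target_rect. *)
definition lap_rect :: "nat \<Rightarrow> complex set" where
  "lap_rect k = rect ((real k - 2) / 3) (1/12) (1/20)"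

lemma lap_rect_disjoint:
  assumes "j \<noteq> k"
  shows "lap_rect j \<inter> lap_rect k = {}"
proof -
  have jk: "real j + 1 \<le> real k \<or> real k + 1 \<le> real j"
    using assms by linarith
  have False if "w \<in> lap_rect j" "w \<in> lap_rect k" for w
  proof -
    have "\<bar>Re w - (real j - 2) / 3\<bar> \<le> 1/12" "\<bar>Re w - (real k - 2) / 3\<bar> \<le> 1/12"
      using that by (simp_all add: lap_rect_def mem_rect)
    then show False
      using jk by (auto simp only: abs_le_iff) (simp_all add: field_simps)
  qed
  then show ?thesis
    by blast
qed

lemma lap_rect_subset_ball: "k \<in> {1, 2, 3} \<Longrightarrow> lap_rect k \<subseteq> ball 0 1"
  unfolding lap_rect_def by (rule rect_subset_ball) auto

lemma target_rect_subset_ball: "target_rect \<subseteq> ball 0 1"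
  unfolding target_rect_def by (rule rect_subset_ball) auto

lemma homeomorphism_fold_plane_lap:
  assumes "k \<in> {1, 2, 3}"
  shows "\<exists>g. homeomorphism (lap_rect k) target_rect fold_plane g"
proof -
  define c where "c = (real k - 2) / 3"
  define m :: real where "m = (-1) ^ (k + 1) * 3"
  have "\<bar>m\<bar> = 3"
    unfolding m_def abs_mult power_abs by simp
  then have "rect 0 (\<bar>m\<bar> * (1/12)) (1/20) = target_rect"
    by (simp add: target_rect_def)
  moreover have "lap_rect k = rect c (1/12) (1/20)"
    by (simp add: lap_rect_def c_def)
  moreover have "m \<noteq> 0"
    using \<open>\<bar>m\<bar> = 3\<close> by auto
  ultimately have stretch: "homeomorphism (lap_rect k) target_rect
               (\<lambda>w. Complex (m * (Re w - c)) (Im w)) (\<lambda>v. Complex (Re v / m + c) (Im v))"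
    using homeomorphism_rect_stretch[of m c "1/12" "1/20"] by simp
  have fold_eq: "fold_plane w = Complex (m * (Re w - c)) (Im w)" if "w \<in> lap_rect k" for w
  proof -
    have "\<bar>Re w - c\<bar> \<le> 1/12" "\<bar>Im w\<bar> \<le> 1/20"
      using that by (simp_all add: lap_rect_def c_def mem_rect)
    moreover have "zigzag (Re w) = m * (Re w - c)"
      using zigzag_on_third[OF assms, of "Re w"] \<open>\<bar>Re w - c\<bar> \<le> 1/12\<close> by (simp add: m_def c_def)
    ultimately show ?thesis
      using fold_plane_on_strip[of w] by simp
  qed
  have "homeomorphism (lap_rect k) target_rect fold_plane (\<lambda>v. Complex (Re v / m + c) (Im v))"
    by (rule homeomorphism_cong[OF stretch]) (simp_all add: fold_eq)
  then show ?thesis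
    by blast
qed

lemma fold_plane_in_target_rect_iff:
  "fold_plane w \<in> target_rect \<longleftrightarrow> w \<in> lap_rect 1 \<union> lap_rect 2 \<union> lap_rect 3"
proof (cases "\<bar>Im w\<bar> \<le> 1/20")
  case True
  then have "fold_plane w = Complex (zigzag (Re w)) (Im w)"
    by (intro fold_plane_on_strip) auto
  then show ?thesis
    using True abs_zigzag_le_quarter_iff[of "Re w"]
    by (simp add: target_rect_def lap_rect_def mem_rect)
next
  case False
  then show ?thesis
    by (simp add: target_rect_def lap_rect_def mem_rect)
qed

lemma closed_segment_minus_one_avoids_target_rect:
  assumes "cmod p \<le> 1" "Re p \<le> 1/2" "Re p < -1/4 \<or> 3/25 \<le> \<bar>Im p\<bar>"
  shows "closed_segment p (-1) \<subseteq> cball 0 1 - target_rect"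
proof
  fix z assume "z \<in> closed_segment p (-1)"
  then have "z \<in> cball 0 1"
    using assms(1) closed_segment_subset[OF _ _ convex_cball, of p 0 1 "-1"] by auto
  moreover obtain u where u: "0 \<le> u" "u \<le> 1" and z: "z = (1 - u) *\<^sub>R p + u *\<^sub>R (-1)"
    using \<open>z \<in> closed_segment p (-1)\<close> unfolding closed_segment_def by auto
  have re: "Re z = (1 - u) * Re p - u" and im: "\<bar>Im z\<bar> = (1 - u) * \<bar>Im p\<bar>"
    using u by (simp_all add: z scaleR_conv_of_real abs_mult)
  have "z \<notin> target_rect"
  proof
    assume "z \<in> target_rect"
    then have z_box: "-1/4 \<le> Re z" "\<bar>Im z\<bar> \<le> 1/20"
      by (auto simp: target_rect_def mem_rect)
    from assms(3) show False
    proof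
      assume "Re p < -1/4"
      have "(1 - u) * (Re p + 1/4) \<le> 0"
        using \<open>Re p < -1/4\<close> u by (simp add: mult_nonneg_nonpos)
      moreover have "Re z + 1/4 = (1 - u) * (Re p + 1/4) - 3/4 * u"
        unfolding re by (simp add: field_simps)
      ultimately have "u = 0"
        using z_box u by linarith
      then show False
        using \<open>Re p < -1/4\<close> z_box re by simp
    next
      \<comment> \<open>While the segment stays right of -1/4, at least half of the height of p survives.\<close>
      assume Im_p: "3/25 \<le> \<bar>Im p\<bar>"
      have "(1 - u) * Re p \<le> (1 - u) * (1/2)"
        using assms(2) u by (intro mult_left_mono) auto
      then have "1/2 \<le> 1 - u"
        using z_box re by (simp add: algebra_simps)
      then have "1/2 * (3/25) \<le> (1 - u) * \<bar>Im p\<bar>"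
        using Im_p by (intro mult_mono) auto
      then show False
        using z_box im by simp
    qed
  qed
  ultimately show "z \<in> cball 0 1 - target_rect"
    by blast
qed

section \<open>The folding map of the sphere\<close>

(* The two branches agree on the equator because fold_plane fixes the unit circle. *)
definition fold_sphere :: "real^3 \<Rightarrow> real^3" where
  "fold_sphere x = (if x$3 \<le> 0 then sphere_lift (-1) (fold_plane (plane_proj x)) else x)"

lemma fold_sphere_sphere_lift_lower:
  "cmod w \<le> 1 \<Longrightarrow> fold_sphere (sphere_lift (-1) w) = sphere_lift (-1) (fold_plane w)"
  by (simp add: fold_sphere_def sphere_lift_lower_nonpos del: sphere_lift_component3)

lemma fold_sphere_sphere_lift_upper:
  "cmod w < 1 \<Longrightarrow> fold_sphere (sphere_lift 1 w) = sphere_lift 1 w"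
  using sphere_lift_upper_pos by (force simp: fold_sphere_def simp del: sphere_lift_component3)

lemma continuous_on_fold_sphere: "continuous_on S2 fold_sphere"
  unfolding fold_sphere_def
proof (rule continuous_on_cases_le)
  show "continuous_on {x \<in> S2. x$3 \<le> 0} (\<lambda>x. sphere_lift (-1) (fold_plane (plane_proj x)))"
    by (intro continuous_on_compose2[OF continuous_on_sphere_lift]
          continuous_on_compose2[OF continuous_on_fold_plane] continuous_on_plane_proj) auto
  show "continuous_on {x \<in> S2. 0 \<le> x$3} (\<lambda>x. x)"
    by (rule continuous_on_id)
  show "continuous_on S2 (\<lambda>x. x$3)"
    by (intro continuous_intros)
next
  fix x assume x: "x \<in> S2" "x$3 = 0"
  then have "cmod (plane_proj x) = 1"
    using cmod_plane_proj_power2[OF x(1)] norm_ge_zero[of "plane_proj x"]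
    by (auto simp: power2_eq_1_iff)
  then show "sphere_lift (-1) (fold_plane (plane_proj x)) = x"
    using x sphere_lift_plane_proj[of x "-1"] by (simp add: fold_plane_unit_circle)
qed

lemma fold_sphere_in_S2: "x \<in> S2 \<Longrightarrow> fold_sphere x \<in> S2"
  by (simp add: fold_sphere_def sphere_lift_in_S2 cmod_fold_plane_le_1 cmod_plane_proj_le_1)

lemma fold_sphere_preimage_upper:
  assumes "K \<subseteq> ball 0 1"
  shows "{x \<in> S2. fold_sphere x \<in> sphere_lift 1 ` K} = sphere_lift 1 ` K"
proof (intro equalityI subsetI)
  fix x assume "x \<in> {x \<in> S2. fold_sphere x \<in> sphere_lift 1 ` K}"
  then have x: "x \<in> S2" and fx: "fold_sphere x \<in> sphere_lift 1 ` K"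
    by auto
  have "\<not> x$3 \<le> 0"
  proof
    assume "x$3 \<le> 0"
    then have "fold_sphere x \<in> sphere_lift (-1) ` cball 0 1"
      using x by (simp add: fold_sphere_def cmod_fold_plane_le_1 cmod_plane_proj_le_1)
    then show False
      using fx sphere_lift_upper_lower_disjoint[OF assms, of "cball 0 1"] by blast
  qed
  then show "x \<in> sphere_lift 1 ` K"
    using fx by (simp add: fold_sphere_def)
next
  fix x assume "x \<in> sphere_lift 1 ` K"
  then show "x \<in> {x \<in> S2. fold_sphere x \<in> sphere_lift 1 ` K}"
    using assms by (auto simp: fold_sphere_sphere_lift_upper intro!: sphere_lift_in_S2)
qed

lemma fold_sphere_preimage_lower:
  assumes "K \<subseteq> cball 0 1"
  shows "{x \<in> S2. fold_sphere x \<in> sphere_lift (-1) ` K} =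
         sphere_lift (-1) ` (cball 0 1 \<inter> fold_plane -` K)"
proof -
  have "fold_sphere x \<in> sphere_lift (-1) ` K \<longleftrightarrow> x \<in> sphere_lift (-1) ` (cball 0 1 \<inter> fold_plane -` K)"
    if x: "x \<in> S2" for x
  proof (cases "x$3 \<le> 0")
    case True
    let ?w = "plane_proj x"
    have "fold_sphere x \<in> sphere_lift (-1) ` K \<longleftrightarrow> fold_plane ?w \<in> K"
      using True by (simp add: fold_sphere_def inj_image_mem_iff[OF inj_sphere_lift])
    also have "\<dots> \<longleftrightarrow> ?w \<in> cball 0 1 \<inter> fold_plane -` K"
      using cmod_plane_proj_le_1[OF x] by simp
    also have "\<dots> \<longleftrightarrow> sphere_lift (-1) ?w \<in> sphere_lift (-1) ` (cball 0 1 \<inter> fold_plane -` K)"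
      by (simp add: inj_image_mem_iff[OF inj_sphere_lift])
    also have "sphere_lift (-1) ?w = x"
      using x True sphere_lift_plane_proj[of x "-1"] by simp
    finally show ?thesis .
  next
    case False
    then show ?thesis
      using x assms by (simp add: fold_sphere_def mem_sphere_lift_image)
  qed
  moreover have "sphere_lift (-1) ` (cball 0 1 \<inter> fold_plane -` K) \<subseteq> S2"
    by (auto intro: sphere_lift_in_S2)
  ultimately show ?thesis
    by blast
qed

lemma homeomorphism_fold_sphere_lower:
  assumes "homeomorphism L K fold_plane g" "L \<subseteq> cball 0 1"
  shows "\<exists>g'. homeomorphism (sphere_lift (-1) ` L) (sphere_lift (-1) ` K) fold_sphere g'"
proof -
  have "homeomorphism (sphere_lift (-1) ` L) (sphere_lift (-1) ` K) fold_sphere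
          (sphere_lift (-1) \<circ> g \<circ> plane_proj)"
    by (rule homeomorphism_cong[OF homeomorphism_sphere_lift_conj[OF assms(1)]])
       (use assms(2) in \<open>auto simp: fold_sphere_sphere_lift_lower\<close>)
  then show ?thesis
    by blast
qed

section \<open>Loops around the poles\<close>

lemma winding_number_nullhomotopic_image:
  assumes "homotopic_loops S p (linepath a a)" "continuous_on S h" "h ` S \<subseteq> - {z}"
  shows "winding_number (h \<circ> p) z = 0"
proof -
  have "a \<in> S"
    using homotopic_loops_imp_subset[OF assms(1)] by auto
  have "homotopic_loops (h ` S) (h \<circ> p) (h \<circ> linepath a a)"
    using assms(1,2) by (rule homotopic_loops_continuous_image) auto
  then have "homotopic_loops (- {z}) (h \<circ> p) (linepath (h a) (h a))"
    using assms(3) by (auto simp: linepath_refl o_def intro: homotopic_loops_subset)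
  then have "winding_number (h \<circ> p) z = winding_number (linepath (h a) (h a)) z"
    by (rule winding_number_homotopic_loops)
  also have "\<dots> = 0"
  proof -
    have "h a \<noteq> z"
      using \<open>a \<in> S\<close> assms(3) by auto
    then show ?thesis
      by simp
  qed
  finally show ?thesis .
qed

lemma sphere_loop_not_nullhomotopic:
  assumes "winding_number (plane_proj \<circ> q) 0 \<noteq> 0"
    and "sphere_lift 1 0 \<in> int_S2 U" "sphere_lift (-1) 0 \<in> int_S2 U"
  shows "\<not> homotopic_loops (S2 - int_S2 U) q (linepath a a)"
proof
  assume "homotopic_loops (S2 - int_S2 U) q (linepath a a)"
  moreover have "plane_proj ` (S2 - int_S2 U) \<subseteq> - {0}"
    using assms(2,3) plane_proj_eq_0_imp_pole by fastforce
  ultimately have "winding_number (plane_proj \<circ> q) 0 = 0"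
    by (rule winding_number_nullhomotopic_image[OF _ continuous_on_plane_proj])
  with assms(1) show False
    by contradiction
qed

lemma circlepath_in_sphere: "circlepath z r t \<in> sphere z \<bar>r\<bar>"
  by (simp add: circlepath dist_norm norm_mult norm_exp_eq_Re)

(* It surrounds lap_rect 1 and lap_rect 2, on which zigzag has slopes 3 and -3, but not lap_rect 3,
   and it meets the strip around the real axis only where zigzag sends it to the left of target_rect. *)
definition two_lap_circle :: "real \<Rightarrow> complex" where
  "two_lap_circle = circlepath (-4/25) (3/10)"

lemma two_lap_circle_point_bounds:
  assumes "w \<in> sphere (-4/25) (3/10)"
  shows "\<bar>Re w + 4/25\<bar> \<le> 3/10" "\<bar>Im w\<bar> \<le> 3/10"
    and "\<bar>Im w\<bar> < 3/25 \<Longrightarrow> Re w < -43/100 \<or> 11/100 < Re w"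
proof -
  have radius: "cmod (w + 4/25) = 3/10"
    using assms by (simp add: dist_norm norm_minus_commute)
  have circle: "(Re w + 4/25)^2 + (Im w)^2 = (3/10)^2"
    unfolding radius[symmetric] cmod_power2 by simp
  then have "(Re w + 4/25)^2 \<le> (3/10)^2" "(Im w)^2 \<le> (3/10)^2"
    using zero_le_power2[of "Im w"] zero_le_power2[of "Re w + 4/25"] by linarith+
  then show "\<bar>Re w + 4/25\<bar> \<le> 3/10" "\<bar>Im w\<bar> \<le> 3/10"
    using power2_le_iff_abs_le[of "3/10::real"] by auto
  assume "\<bar>Im w\<bar> < 3/25"
  then have "(Im w)^2 < (3/25)^2"
    by (metis abs_ge_zero power2_abs power_strict_mono zero_less_numeral)
  then have "(27/100)^2 < (Re w + 4/25)^2"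
    using circle unfolding power2_eq_square by linarith
  then have "\<not> \<bar>Re w + 4/25\<bar> \<le> 27/100"
    using power2_le_iff_abs_le[of "27/100::real" "Re w + 4/25"] by auto
  then show "Re w < -43/100 \<or> 11/100 < Re w"
    by linarith
qed

lemma two_lap_circle_in_ball:
  assumes "w \<in> sphere (-4/25) (3/10)"
  shows "cmod w < 1"
  using two_lap_circle_point_bounds[OF assms] by (intro cmod_less_1_if_abs_le_half) linarith+

lemma two_lap_circle_avoids_lap_rect:
  assumes "w \<in> sphere (-4/25) (3/10)" "k \<in> {1, 2, 3}"
  shows "w \<notin> lap_rect k"
proof
  assume "w \<in> lap_rect k"
  then have "\<bar>Re w - (real k - 2) / 3\<bar> \<le> 1/12" "\<bar>Im w\<bar> \<le> 1/20"
    by (simp_all add: lap_rect_def mem_rect)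
  then show False
    using two_lap_circle_point_bounds[OF assms(1)] assms(2) by (auto simp: abs_le_iff)
qed

lemma fold_two_lap_circle_segment:
  assumes "w \<in> sphere (-4/25) (3/10)"
  shows "closed_segment (fold_plane w) (-1) \<subseteq> cball 0 1 - target_rect"
proof (rule closed_segment_minus_one_avoids_target_rect)
  note w = two_lap_circle_point_bounds[OF assms]
  have fold_w: "fold_plane w = Complex (zigzag (Re w)) (Im w)"
    using w(2) by (rule fold_plane_on_strip)
  show "cmod (fold_plane w) \<le> 1"
    using two_lap_circle_in_ball[OF assms] by (simp add: cmod_fold_plane_le_1)
  have "\<bar>Re w\<bar> \<le> 1/2"
    using w(1) by linarith
  then show "Re (fold_plane w) \<le> 1/2"
    using abs_zigzag_le[of "Re w"] by (simp add: fold_w)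
  show "Re (fold_plane w) < -1/4 \<or> 3/25 \<le> \<bar>Im (fold_plane w)\<bar>"
  proof (cases "\<bar>Im w\<bar> < 3/25")
    case True
    then consider "Re w < -43/100" | "11/100 < Re w"
      using w(3) by blast
    then show ?thesis
    proof cases
      case 1
      then show ?thesis
        using w(1) zigzag_on_third[of 1 "Re w"] by (simp add: fold_w)
    next
      case 2
      then show ?thesis
        using w(1) zigzag_on_third[of 2 "Re w"] by (simp add: fold_w)
    qed
  qed simp
qed

lemma fold_two_lap_circle_nullhomotopic:
  "homotopic_loops (cball 0 1 - target_rect) (fold_plane \<circ> two_lap_circle) (linepath (-1) (-1))"
proof (rule homotopic_loops_linear)
  show "path (fold_plane \<circ> two_lap_circle)"
    unfolding two_lap_circle_def by (intro path_continuous_image continuous_on_fold_plane) simp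
  show "pathfinish (fold_plane \<circ> two_lap_circle) = pathstart (fold_plane \<circ> two_lap_circle)"
    by (simp add: two_lap_circle_def pathfinish_compose pathstart_compose)
  fix t :: real
  show "closed_segment ((fold_plane \<circ> two_lap_circle) t) (linepath (-1) (-1) t) \<subseteq> cball 0 1 - target_rect"
    using circlepath_in_sphere[of "-4/25" "3/10" t]
    by (simp add: two_lap_circle_def linepath_refl fold_two_lap_circle_segment)
qed simp_all

definition upper_disk :: "(real^3) set" where
  "upper_disk = sphere_lift 1 ` rect 0 (1/4) (1/4)"

definition target_disk :: "(real^3) set" where
  "target_disk = sphere_lift (-1) ` target_rect"

definition lap_disk :: "nat \<Rightarrow> (real^3) set" where
  "lap_disk k = sphere_lift (-1) ` lap_rect k"

definition two_lap_loop :: "real \<Rightarrow> real^3" where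
  "two_lap_loop = sphere_lift (-1) \<circ> two_lap_circle"

lemma upper_rect_subset_ball: "rect 0 (1/4) (1/4) \<subseteq> ball 0 1"
  by (rule rect_subset_ball) auto

lemma closed_disk_S2_upper_disk: "closed_disk_S2 upper_disk"
  unfolding upper_disk_def by (rule closed_disk_S2_sphere_lift_rect) auto

lemma closed_disk_S2_target_disk: "closed_disk_S2 target_disk"
  unfolding target_disk_def target_rect_def by (rule closed_disk_S2_sphere_lift_rect) auto

lemma closed_disk_S2_lap_disk: "k \<in> {1, 2, 3} \<Longrightarrow> closed_disk_S2 (lap_disk k)"
  unfolding lap_disk_def lap_rect_def by (rule closed_disk_S2_sphere_lift_rect) auto

lemma upper_disk_target_disk_disjoint: "upper_disk \<inter> target_disk = {}"
  unfolding upper_disk_def target_disk_def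
  using upper_rect_subset_ball target_rect_subset_ball by (intro sphere_lift_upper_lower_disjoint) auto

lemma lap_disk_disjoint: "j \<noteq> k \<Longrightarrow> lap_disk j \<inter> lap_disk k = {}"
  by (simp add: lap_disk_def image_Int[OF inj_sphere_lift, symmetric] lap_rect_disjoint)

lemma fold_sphere_preimage_upper_disk: "{x \<in> S2. fold_sphere x \<in> upper_disk} = upper_disk"
  unfolding upper_disk_def using upper_rect_subset_ball by (rule fold_sphere_preimage_upper)

lemma fold_sphere_fixes_upper_disk: "x \<in> upper_disk \<Longrightarrow> fold_sphere x = x"
  using upper_rect_subset_ball by (auto simp: upper_disk_def fold_sphere_sphere_lift_upper)

lemma fold_sphere_preimage_target_disk:
  "{x \<in> S2. fold_sphere x \<in> target_disk} = lap_disk 1 \<union> lap_disk 2 \<union> lap_disk 3"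
proof -
  have "cball 0 1 \<inter> fold_plane -` target_rect = lap_rect 1 \<union> lap_rect 2 \<union> lap_rect 3"
    using lap_rect_subset_ball[of 1] lap_rect_subset_ball[of 2] lap_rect_subset_ball[of 3]
    by (auto simp: fold_plane_in_target_rect_iff)
  moreover have "target_rect \<subseteq> cball 0 1"
    using target_rect_subset_ball by auto
  ultimately show ?thesis
    by (simp add: target_disk_def lap_disk_def fold_sphere_preimage_lower image_Un)
qed

lemma homeomorphism_fold_sphere_lap_disk:
  "k \<in> {1, 2, 3} \<Longrightarrow> \<exists>g. homeomorphism (lap_disk k) target_disk fold_sphere g"
  using homeomorphism_fold_plane_lap lap_rect_subset_ball
  by (metis homeomorphism_fold_sphere_lower lap_disk_def target_disk_def order.trans ball_subset_cball)

lemma two_lap_loop_is_loop: "path two_lap_loop" "pathfinish two_lap_loop = pathstart two_lap_loop"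
  unfolding two_lap_loop_def two_lap_circle_def
  by (auto intro: path_continuous_image continuous_on_sphere_lift simp: pathfinish_compose pathstart_compose)

lemma path_image_two_lap_loop:
  "path_image two_lap_loop \<subseteq> S2 - int_S2 (upper_disk \<union> lap_disk 1 \<union> lap_disk 2 \<union> lap_disk 3)"
proof -
  have "sphere_lift (-1) w \<in> S2 - (upper_disk \<union> lap_disk 1 \<union> lap_disk 2 \<union> lap_disk 3)"
    if w: "w \<in> sphere (-4/25) (3/10)" for w
  proof -
    have "cmod w \<le> 1"
      using two_lap_circle_in_ball[OF w] by simp
    then have "sphere_lift (-1) w \<notin> upper_disk"
      using sphere_lift_upper_lower_disjoint[OF upper_rect_subset_ball, of "{w}"]
      by (auto simp: upper_disk_def)
    moreover have "sphere_lift (-1) w \<notin> lap_disk k" if "k \<in> {1, 2, 3}" for k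
      using two_lap_circle_avoids_lap_rect[OF w that]
      by (simp add: lap_disk_def inj_image_mem_iff[OF inj_sphere_lift])
    ultimately show ?thesis
      using \<open>cmod w \<le> 1\<close> sphere_lift_in_S2 by auto
  qed
  then show ?thesis
    using interior_of_subset[of "top_of_set S2"]
    by (fastforce simp: two_lap_loop_def two_lap_circle_def path_image_compose int_S2_def)
qed

lemma two_lap_loop_not_nullhomotopic:
  "\<not> homotopic_loops (S2 - int_S2 (upper_disk \<union> lap_disk 1 \<union> lap_disk 2 \<union> lap_disk 3))
      two_lap_loop (linepath a a)"
proof (rule sphere_loop_not_nullhomotopic)
  have "plane_proj \<circ> two_lap_loop = circlepath (-4/25) (3/10)"
    by (simp add: two_lap_loop_def two_lap_circle_def o_def)
  then show "winding_number (plane_proj \<circ> two_lap_loop) 0 \<noteq> 0"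
    by (simp add: winding_number_circlepath)
  have "sphere_lift 1 0 \<in> int_S2 upper_disk"
    unfolding upper_disk_def
    using upper_rect_subset_ball centre_in_interior_rect[of "1/4" "1/4" 0]
    by (intro sphere_lift_in_int_S2) auto
  then show "sphere_lift 1 0 \<in> int_S2 (upper_disk \<union> lap_disk 1 \<union> lap_disk 2 \<union> lap_disk 3)"
    unfolding int_S2_def by (meson interior_of_mono subsetD Un_upper1 order.trans)
  have "sphere_lift (-1) 0 \<in> int_S2 (lap_disk 2)"
    unfolding lap_disk_def
    using lap_rect_subset_ball[of 2] centre_in_interior_rect[of "1/12" "1/20" 0]
    by (intro sphere_lift_in_int_S2) (auto simp: lap_rect_def)
  then show "sphere_lift (-1) 0 \<in> int_S2 (upper_disk \<union> lap_disk 1 \<union> lap_disk 2 \<union> lap_disk 3)"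
    unfolding int_S2_def by (meson interior_of_mono subsetD Un_upper1 Un_upper2 order.trans)
qed

lemma fold_two_lap_loop_nullhomotopic:
  "homotopic_loops (S2 - int_S2 (upper_disk \<union> target_disk)) (fold_sphere \<circ> two_lap_loop)
     (linepath (sphere_lift (-1) (-1)) (sphere_lift (-1) (-1)))"
proof -
  have "homotopic_loops (sphere_lift (-1) ` (cball 0 1 - target_rect))
          (sphere_lift (-1) \<circ> (fold_plane \<circ> two_lap_circle)) (sphere_lift (-1) \<circ> linepath (-1) (-1))"
    using fold_two_lap_circle_nullhomotopic continuous_on_sphere_lift
    by (rule homotopic_loops_continuous_image) auto
  moreover have "sphere_lift (-1) ` (cball 0 1 - target_rect) \<subseteq> S2 - int_S2 (upper_disk \<union> target_disk)"
  proof -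
    have "sphere_lift (-1) ` (cball 0 1 - target_rect) \<subseteq> S2 - (upper_disk \<union> target_disk)"
      using sphere_lift_upper_lower_disjoint[OF upper_rect_subset_ball, of "cball 0 1"]
      by (auto simp: upper_disk_def target_disk_def inj_eq[OF inj_sphere_lift]
               intro: sphere_lift_in_S2)
    then show ?thesis
      using interior_of_subset[of "top_of_set S2" "upper_disk \<union> target_disk"]
      by (auto simp: int_S2_def)
  qed
  moreover have "fold_sphere \<circ> two_lap_loop = sphere_lift (-1) \<circ> (fold_plane \<circ> two_lap_circle)"
  proof
    fix t
    have "cmod (two_lap_circle t) \<le> 1"
      using two_lap_circle_in_ball circlepath_in_sphere[of "-4/25" "3/10" t]
      by (simp add: two_lap_circle_def less_imp_le)
    then show "(fold_sphere \<circ> two_lap_loop) t = (sphere_lift (-1) \<circ> (fold_plane \<circ> two_lap_circle)) t"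
      by (simp add: two_lap_loop_def fold_sphere_sphere_lift_lower)
  qed
  ultimately show ?thesis
    by (auto simp: linepath_refl o_def intro: homotopic_loops_subset)
qed

theorem lemma3p4:
  shows "\<exists>(D0 :: (real^3) set) (D1 :: (real^3) set) (D :: nat \<Rightarrow> (real^3) set) (f :: real^3 \<Rightarrow> real^3).
    closed_disk_S2 D0 \<and> closed_disk_S2 D1 \<and> D0 \<inter> D1 = {} \<and>
    continuous_on S2 f \<and> f ` S2 \<subseteq> S2 \<and>
    {x \<in> S2. f x \<in> D0} = D0 \<and> (\<forall>x\<in>D0. f x = x) \<and>
    (\<forall>k\<in>{1,2,3}. closed_disk_S2 (D k)) \<and>
    (\<forall>j\<in>{1,2,3}. \<forall>k\<in>{1,2,3}. j \<noteq> k \<longrightarrow> D j \<inter> D k = {}) \<and>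
    {x \<in> S2. f x \<in> D1} = D 1 \<union> D 2 \<union> D 3 \<and>
    (\<forall>k\<in>{1,2,3}. \<exists>g. homeomorphism (D k) D1 f g) \<and>
    (\<exists>\<gamma>. path \<gamma> \<and> pathfinish \<gamma> = pathstart \<gamma> \<and>
       path_image \<gamma> \<subseteq> S2 - int_S2 (D0 \<union> D 1 \<union> D 2 \<union> D 3) \<and>
       \<not> (\<exists>a. homotopic_loops (S2 - int_S2 (D0 \<union> D 1 \<union> D 2 \<union> D 3)) \<gamma> (linepath a a)) \<and>
       (\<exists>a. homotopic_loops (S2 - int_S2 (D0 \<union> D1)) (f \<circ> \<gamma>) (linepath a a)))"
proof -
  note disks = closed_disk_S2_upper_disk closed_disk_S2_target_disk closed_disk_S2_lap_disk
    upper_disk_target_disk_disjoint lap_disk_disjoint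
  note folding = continuous_on_fold_sphere fold_sphere_in_S2 fold_sphere_preimage_upper_disk
    fold_sphere_fixes_upper_disk fold_sphere_preimage_target_disk homeomorphism_fold_sphere_lap_disk
  note loop = two_lap_loop_is_loop path_image_two_lap_loop two_lap_loop_not_nullhomotopic
    fold_two_lap_loop_nullhomotopic
  show ?thesis
    by (rule exI[of _ upper_disk], rule exI[of _ target_disk], rule exI[of _ lap_disk],
        rule exI[of _ fold_sphere], intro conjI exI[of _ two_lap_loop])
      (use disks folding loop in auto)
qed

end
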